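(* Let $f_0$ be a probability density on $[0,1]$ with $0<\rho_0\le f_0\le D_0<\infty$, and let $X_1,\dots,X_n$ be i.i.d. with density $f_0$. Let $(a_n)$ be real numbers with $na_n^2\ge1$ for all $n\ge1$, and let $(\Pi_n)$ be priors on probability densities on $[0,1]$ that are bounded and bounded away from $0$, each $\Pi_n$ supported in $\{f: h(f,f_0)\le a_n\}$. Let $(\gamma_n)\subset L^\infty[0,1]$, $\tilde\gamma_n=\gamma_n-\int_0^1\gamma_nf_0$, and suppose for some $m>0$ and all $n\ge1$, $$\|\tilde\gamma_n\|_L\le m,\qquad\|\tilde\gamma_n\|_\infty\le\big(4a_n\log(n+1)\big)^{-1}.$$ Then there exists $C>0$ depending only on $m$ and $\|f_0\|_\infty$ such that for every $n\ge1$ and every real $t$ with $|t|\le\log n$, $$E^{\Pi_n}\big[e^{t\sqrt n\langle f-f_0,\gamma_n\rangle_2}\mid X^{(n)}\big]\le e^{Ct^2+tW_n(\gamma_n)}\,\frac{\int e^{\ell_n(f_t)-\ell_n(f_0)}\,d\Pi_n(f)}{\int e^{\ell_n(f)-\ell_n(f_0)}\,d\Pi_n(f)},$$ where $f_t=f\,e^{-t\tilde\gamma_n/\sqrt n}\big/\int_0^1f\,e^{-t\tilde\gamma_n/\sqrt n}$.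
   Context: $\ell_n(f)=\sum_{i=1}^n\log f(X_i)$. For $u\in L^2(f_0)$, $\|u\|_L^2=\int_0^1(u-\int uf_0)^2f_0$ and $W_n(u)=n^{-1/2}\sum_{i=1}^n\big(u(X_i)-\int_0^1uf_0\big)$. $h$ is the Hellinger distance, $h(f,g)^2=\int_0^1(\sqrt f-\sqrt g)^2$. $E^{\Pi_n}[\cdot\mid X^{(n)}]$ is expectation under the posterior $d\Pi_n(f\mid X^{(n)})\propto e^{\ell_n(f)}d\Pi_n(f)$. *)

theory Defs
  imports "HOL-Probability.Probability"
begin

definition loglik :: "nat \<Rightarrow> (nat \<Rightarrow> real) \<Rightarrow> (real \<Rightarrow> real) \<Rightarrow> real" where
  "loglik n X f = (\<Sum>i=1..n. ln (f (X i)))"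

definition density01 :: "(real \<Rightarrow> real) \<Rightarrow> bool" where
  "density01 f \<longleftrightarrow> set_borel_measurable lborel {0..1} f \<and> (\<forall>x\<in>{0..1}. 0 \<le> f x)
     \<and> set_integrable lborel {0..1} f \<and> (LINT x:{0..1}|lborel. f x) = 1"

definition Linf01 :: "(real \<Rightarrow> real) \<Rightarrow> bool" where
  "Linf01 u \<longleftrightarrow> set_borel_measurable lborel {0..1} u
     \<and> (\<exists>B. AE x in lborel. x \<in> {0..1} \<longrightarrow> \<bar>u x\<bar> \<le> B)"

definition hellinger :: "(real \<Rightarrow> real) \<Rightarrow> (real \<Rightarrow> real) \<Rightarrow> real" where
  "hellinger f g = sqrt (LINT x:{0..1}|lborel. (sqrt (f x) - sqrt (g x))\<^sup>2)"

definition inner2 :: "(real \<Rightarrow> real) \<Rightarrow> (real \<Rightarrow> real) \<Rightarrow> real" where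
  "inner2 f g = (LINT x:{0..1}|lborel. f x * g x)"

definition center :: "(real \<Rightarrow> real) \<Rightarrow> (real \<Rightarrow> real) \<Rightarrow> real \<Rightarrow> real" where
  "center f0 u = (\<lambda>x. u x - (LINT y:{0..1}|lborel. u y * f0 y))"

definition normL :: "(real \<Rightarrow> real) \<Rightarrow> (real \<Rightarrow> real) \<Rightarrow> real" where
  "normL f0 u = sqrt (LINT x:{0..1}|lborel. (center f0 u x)\<^sup>2 * f0 x)"

definition Wn :: "(real \<Rightarrow> real) \<Rightarrow> nat \<Rightarrow> (nat \<Rightarrow> real) \<Rightarrow> (real \<Rightarrow> real) \<Rightarrow> real" where
  "Wn f0 n X u = (\<Sum>i=1..n. center f0 u (X i)) / sqrt (real n)"

definition tilt :: "nat \<Rightarrow> real \<Rightarrow> (real \<Rightarrow> real) \<Rightarrow> (real \<Rightarrow> real) \<Rightarrow> real \<Rightarrow> real" where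
  "tilt n t g f = (\<lambda>x. f x * exp (- t * g x / sqrt (real n))
      / (LINT y:{0..1}|lborel. f y * exp (- t * g y / sqrt (real n))))"

text \<open>Posterior expectation of a nonnegative functional phi, for posterior proportional to exp(loglik) dP.\<close>
definition post_exp :: "(real \<Rightarrow> real) measure \<Rightarrow> nat \<Rightarrow> (nat \<Rightarrow> real) \<Rightarrow> ((real \<Rightarrow> real) \<Rightarrow> real) \<Rightarrow> ennreal" where
  "post_exp P n X \<phi> = (\<integral>\<^sup>+ f. ennreal (\<phi> f * exp (loglik n X f)) \<partial>P) / (\<integral>\<^sup>+ f. ennreal (exp (loglik n X f)) \<partial>P)"

end

theory Submission
  imports Defs
begin

(* For a prior draw f put g = gamma - int gamma f0 and Z = int f exp(-t g/sqrt n). Then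
   f_t = f exp(-t g/sqrt n)/Z and l_n(f_t) = l_n(f) - t W_n(gamma) - n log Z, so the theorem follows
   by integrating against the prior once  t sqrt n <f - f0, gamma> + n log Z <= C t^2  holds for every
   f in its support. Since <f - f0, gamma> = int f g, the bounds log Z <= Z - 1 and
   exp x <= 1 + x + x^2 (x <= 1) make the left side at most t^2 int f g^2; they apply because
   |t| |g|_oo <= sqrt n by |t| <= log n and n a_n^2 >= 1. Finally f <= 2 f0 + 2 (sqrt f - sqrt f0)^2 gives
   int f g^2 <= 2 |g|_L^2 + 2 |g|_oo^2 h(f,f0)^2 <= 2 m^2 + 1, so C = 2 m^2 + 1 works. *)

lemma exp_le_one_plus_sq:
  fixes x :: real
  assumes "x \<le> 1"
  shows "exp x \<le> 1 + x + x\<^sup>2"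
proof (cases "x \<ge> 0")
  case True
  then show ?thesis using exp_bound assms by blast
next
  case False
  have "1 \<le> (1 + x + x\<^sup>2) * (1 - x)"
    using False by (simp add: algebra_simps power2_eq_square power3_eq_cube mult_nonneg_nonpos2)
  also have "\<dots> \<le> (1 + x + x\<^sup>2) * exp (- x)"
  proof (rule mult_left_mono)
    show "1 - x \<le> exp (- x)" using exp_ge_add_one_self[of "- x"] by simp
    have "0 \<le> (x + 1/2)\<^sup>2" by simp
    then show "0 \<le> 1 + x + x\<^sup>2" by (simp add: power2_eq_square algebra_simps)
  qed
  finally have "1 \<le> (1 + x + x\<^sup>2) * exp (- x)" .
  then show ?thesis by (simp add: exp_minus field_simps)
qed

lemma power2_add_le_twice:
  fixes a b :: real
  shows "(a + b)\<^sup>2 \<le> 2 * a\<^sup>2 + 2 * b\<^sup>2"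
proof -
  have "2 * a\<^sup>2 + 2 * b\<^sup>2 - (a + b)\<^sup>2 = (a - b)\<^sup>2" by (simp add: power2_eq_square algebra_simps)
  then show ?thesis using zero_le_power2[of "a - b"] by linarith
qed

lemma integrable_mult_AE_bounded:
  fixes f h :: "'a \<Rightarrow> real"
  assumes "integrable M f" "h \<in> borel_measurable M" "AE x in M. \<bar>h x\<bar> \<le> K"
  shows "integrable M (\<lambda>x. f x * h x)"
proof (rule Bochner_Integration.integrable_bound[where f="\<lambda>x. K * f x"])
  show "integrable M (\<lambda>x. K * f x)" using assms(1) by simp
  show "(\<lambda>x. f x * h x) \<in> borel_measurable M"
    using assms by (auto dest: borel_measurable_integrable)
  show "AE x in M. norm (f x * h x) \<le> norm (K * f x)"
    using assms(3)
  proof eventually_elim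
    case (elim x)
    then have "K \<ge> 0" by linarith
    with elim show ?case by (simp add: abs_mult) (metis abs_ge_zero mult.commute mult_right_mono)
  qed
qed

(* Unlike nn_integral_cmult this needs no measurability, which is unknown for the integrands
   over the prior. *)
lemma nn_integral_cmult_pos:
  fixes r :: real
  assumes "r > 0"
  shows "(\<integral>\<^sup>+ x. ennreal r * g x \<partial>M) = ennreal r * integral\<^sup>N M g"
proof -
  have le: "(\<integral>\<^sup>+ x. ennreal c * h x \<partial>M) \<le> ennreal c * integral\<^sup>N M h" if "c > 0" for c :: real and h
  proof (subst nn_integral_def, rule SUP_least)
    fix s assume "s \<in> {s. simple_function M s \<and> s \<le> (\<lambda>x. ennreal c * h x)}"
    then have s: "simple_function M s" "\<And>x. s x \<le> ennreal c * h x" by (auto simp: le_fun_def)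
    define s' where "s' = (\<lambda>x. ennreal (1 / c) * s x)"
    have s'_simple: "simple_function M s'" unfolding s'_def using s(1) by (auto intro: simple_function_mult)
    have s_eq: "s = (\<lambda>x. ennreal c * s' x)"
      using \<open>c > 0\<close> by (auto simp: s'_def mult.assoc[symmetric] ennreal_mult[symmetric])
    have "s' x \<le> h x" for x
    proof -
      have "s' x \<le> ennreal (1 / c) * (ennreal c * h x)" unfolding s'_def by (rule mult_left_mono[OF s(2)]) simp
      also have "\<dots> = h x" using \<open>c > 0\<close> by (simp add: mult.assoc[symmetric] ennreal_mult[symmetric])
      finally show ?thesis .
    qed
    then have "integral\<^sup>S M s' \<le> integral\<^sup>N M h"
      unfolding nn_integral_def using s'_simple by (intro SUP_upper) (auto simp: le_fun_def)
    then show "integral\<^sup>S M s \<le> ennreal c * integral\<^sup>N M h"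
      unfolding s_eq simple_integral_mult[OF s'_simple] by (rule mult_left_mono) simp
  qed
  have "ennreal r * integral\<^sup>N M g = ennreal r * (\<integral>\<^sup>+ x. ennreal (1 / r) * (ennreal r * g x) \<partial>M)"
    using assms by (simp add: mult.assoc[symmetric] ennreal_mult[symmetric])
  also have "\<dots> \<le> ennreal r * (ennreal (1 / r) * (\<integral>\<^sup>+ x. ennreal r * g x \<partial>M))"
    using assms by (intro mult_left_mono le) auto
  also have "\<dots> = (\<integral>\<^sup>+ x. ennreal r * g x \<partial>M)"
    using assms by (simp add: mult.assoc[symmetric] ennreal_mult[symmetric])
  finally show ?thesis using le[OF assms] by (rule antisym[rotated])
qed

lemma ennreal_mult_divide_mult_cancel:
  fixes r :: real
  assumes "r > 0"
  shows "(ennreal r * x) / (ennreal r * y) = x / y"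
proof -
  have "inverse (ennreal r * y) = inverse (ennreal r) * inverse y"
    using assms by (intro ennreal_inverse_mult') auto
  moreover have "ennreal r * inverse (ennreal r) = 1"
    using assms by (simp add: ennreal_inverse_mult ennreal_mult[symmetric] inverse_ennreal)
  ultimately show ?thesis
    by (simp add: divide_ennreal_def mult_ac)
qed

lemma nn_integral_ratio_shift_le:
  fixes \<psi> l l' :: "'a \<Rightarrow> real"
  assumes "AE x in M. \<psi> x + l x \<le> c + l' x"
  shows "(\<integral>\<^sup>+ x. ennreal (exp (\<psi> x) * exp (l x)) \<partial>M) / (\<integral>\<^sup>+ x. ennreal (exp (l x)) \<partial>M)
    \<le> ennreal (exp c) * (\<integral>\<^sup>+ x. ennreal (exp (l' x - L)) \<partial>M) / (\<integral>\<^sup>+ x. ennreal (exp (l x - L)) \<partial>M)"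
proof -
  let ?e = "ennreal (exp L)"
  have "(\<integral>\<^sup>+ x. ennreal (exp (\<psi> x) * exp (l x)) \<partial>M)
      \<le> (\<integral>\<^sup>+ x. ennreal (exp L) * (ennreal (exp c) * ennreal (exp (l' x - L))) \<partial>M)"
    using assms
    by (intro nn_integral_mono_AE) (auto elim!: eventually_mono simp: ennreal_mult[symmetric] exp_add[symmetric])
  also have "\<dots> = ?e * (ennreal (exp c) * (\<integral>\<^sup>+ x. ennreal (exp (l' x - L)) \<partial>M))"
    by (simp add: nn_integral_cmult_pos)
  finally have num: "(\<integral>\<^sup>+ x. ennreal (exp (\<psi> x) * exp (l x)) \<partial>M)
      \<le> ?e * (ennreal (exp c) * (\<integral>\<^sup>+ x. ennreal (exp (l' x - L)) \<partial>M))" .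
  have den: "(\<integral>\<^sup>+ x. ennreal (exp (l x)) \<partial>M) = ?e * (\<integral>\<^sup>+ x. ennreal (exp (l x - L)) \<partial>M)"
    by (simp add: nn_integral_cmult_pos[symmetric] ennreal_mult[symmetric] exp_add[symmetric])
  have "(\<integral>\<^sup>+ x. ennreal (exp (\<psi> x) * exp (l x)) \<partial>M) / (?e * (\<integral>\<^sup>+ x. ennreal (exp (l x - L)) \<partial>M))
      \<le> ?e * (ennreal (exp c) * (\<integral>\<^sup>+ x. ennreal (exp (l' x - L)) \<partial>M)) / (?e * (\<integral>\<^sup>+ x. ennreal (exp (l x - L)) \<partial>M))"
    by (rule divide_right_mono_ennreal[OF num])
  then show ?thesis
    unfolding den ennreal_mult_divide_mult_cancel[OF exp_gt_zero] by (simp add: mult.assoc)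
qed

lemma integral_diff_densities_mult:
  fixes f f0 \<gamma> :: "'a \<Rightarrow> real"
  assumes f: "integrable M f" "integral\<^sup>L M f = 1" and f0: "integrable M f0" "integral\<^sup>L M f0 = 1"
    and \<gamma>: "\<gamma> \<in> borel_measurable M" "AE x in M. \<bar>\<gamma> x\<bar> \<le> B"
  shows "integral\<^sup>L M (\<lambda>x. (f x - f0 x) * \<gamma> x)
    = integral\<^sup>L M (\<lambda>x. f x * (\<gamma> x - integral\<^sup>L M (\<lambda>y. \<gamma> y * f0 y)))"
proof -
  let ?k = "integral\<^sup>L M (\<lambda>y. \<gamma> y * f0 y)"
  have "integrable M (\<lambda>x. f x * \<gamma> x)" "integrable M (\<lambda>x. f0 x * \<gamma> x)"
    using integrable_mult_AE_bounded[OF _ \<gamma>] f(1) f0(1) by auto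
  then have "integral\<^sup>L M (\<lambda>x. (f x - f0 x) * \<gamma> x) = integral\<^sup>L M (\<lambda>x. f x * \<gamma> x) - ?k"
    by (simp add: mult.commute right_diff_distrib)
  also have "\<dots> = integral\<^sup>L M (\<lambda>x. f x * \<gamma> x) - ?k * integral\<^sup>L M f"
    using f(2) by simp
  also have "\<dots> = integral\<^sup>L M (\<lambda>x. f x * (\<gamma> x - ?k))"
    using \<open>integrable M (\<lambda>x. f x * \<gamma> x)\<close> f(1) by (simp add: right_diff_distrib mult.commute)
  finally show ?thesis .
qed

lemma ln_integral_tilted_density_le:
  fixes f g :: "'a \<Rightarrow> real" and s b :: real
  assumes f: "\<And>x. x \<in> space M \<Longrightarrow> 0 \<le> f x" "integrable M f" "integral\<^sup>L M f = 1"
    and g: "g \<in> borel_measurable M" "AE x in M. \<bar>g x\<bar> \<le> b" and sb: "\<bar>s\<bar> * b \<le> 1"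
  shows "0 < integral\<^sup>L M (\<lambda>x. f x * exp (- s * g x))"
    and "ln (integral\<^sup>L M (\<lambda>x. f x * exp (- s * g x))) + s * integral\<^sup>L M (\<lambda>x. f x * g x)
      \<le> s\<^sup>2 * integral\<^sup>L M (\<lambda>x. f x * (g x)\<^sup>2)"
proof -
  define Z where "Z = integral\<^sup>L M (\<lambda>x. f x * exp (- s * g x))"
  have sg: "AE x in M. \<bar>s * g x\<bar> \<le> 1"
    using g(2) by eventually_elim (metis abs_ge_zero abs_mult mult_left_mono order.trans sb)
  have "(\<lambda>x. exp (- s * g x)) \<in> borel_measurable M"
    using g(1) by measurable
  then have int_fE: "integrable M (\<lambda>x. f x * exp (- s * g x))"
    using sg by (intro integrable_mult_AE_bounded[OF f(2), where K="exp 1"]) (auto elim!: eventually_mono)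
  have int_fg: "integrable M (\<lambda>x. f x * g x)"
    by (rule integrable_mult_AE_bounded[OF f(2) g])
  have "(\<lambda>x. (g x)\<^sup>2) \<in> borel_measurable M"
    using g(1) by measurable
  moreover have "AE x in M. \<bar>(g x)\<^sup>2\<bar> \<le> b\<^sup>2"
    using g(2) by eventually_elim (simp, metis abs_ge_zero power_mono power2_abs)
  ultimately have int_fg2: "integrable M (\<lambda>x. f x * (g x)\<^sup>2)"
    by (rule integrable_mult_AE_bounded[OF f(2)])
  have "exp (- 1) = integral\<^sup>L M (\<lambda>x. exp (- 1) * f x)"
    using f(3) by simp
  also have "\<dots> \<le> Z"
    unfolding Z_def
  proof (rule integral_mono_AE[OF _ int_fE])
    show "AE x in M. exp (- 1) * f x \<le> f x * exp (- s * g x)"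
      using sg
    proof (rule AE_mp, intro AE_I2 impI)
      fix x assume "x \<in> space M" "\<bar>s * g x\<bar> \<le> 1"
      then show "exp (- 1) * f x \<le> f x * exp (- s * g x)"
        using f(1) by (simp add: mult.commute mult_left_mono)
    qed
  qed (use f(2) in simp)
  finally have "0 < Z"
    using exp_gt_zero[of "- 1"] by linarith
  then show "0 < integral\<^sup>L M (\<lambda>x. f x * exp (- s * g x))"
    unfolding Z_def .
  from \<open>0 < Z\<close> have "ln Z + s * integral\<^sup>L M (\<lambda>x. f x * g x) \<le> Z - 1 + s * integral\<^sup>L M (\<lambda>x. f x * g x)"
    using ln_le_minus_one by simp
  also have "\<dots> = integral\<^sup>L M (\<lambda>x. f x * exp (- s * g x) - f x + s * (f x * g x))"
    unfolding Z_def using int_fE int_fg f(2,3) by simp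
  also have "\<dots> = integral\<^sup>L M (\<lambda>x. f x * (exp (- s * g x) - 1 + s * g x))"
    by (simp add: algebra_simps)
  also have "\<dots> \<le> integral\<^sup>L M (\<lambda>x. s\<^sup>2 * (f x * (g x)\<^sup>2))"
  proof (rule integral_mono_AE)
    show "AE x in M. f x * (exp (- s * g x) - 1 + s * g x) \<le> s\<^sup>2 * (f x * (g x)\<^sup>2)"
      using sg
    proof (rule AE_mp, intro AE_I2 impI)
      fix x assume "x \<in> space M" "\<bar>s * g x\<bar> \<le> 1"
      then have "exp (- s * g x) - 1 + s * g x \<le> s\<^sup>2 * (g x)\<^sup>2"
        using exp_le_one_plus_sq[of "- s * g x"] by (simp add: power_mult_distrib abs_le_iff)
      then show "f x * (exp (- s * g x) - 1 + s * g x) \<le> s\<^sup>2 * (f x * (g x)\<^sup>2)"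
        using mult_left_mono f(1)[OF \<open>x \<in> space M\<close>] by (fastforce simp: algebra_simps)
    qed
    have "(\<lambda>x. f x * (exp (- s * g x) - 1 + s * g x)) = (\<lambda>x. f x * exp (- s * g x) - f x + s * (f x * g x))"
      by (simp add: algebra_simps)
    then show "integrable M (\<lambda>x. f x * (exp (- s * g x) - 1 + s * g x))"
      using int_fE int_fg f(2) by simp
  qed (use int_fg2 in simp)
  finally show "ln (integral\<^sup>L M (\<lambda>x. f x * exp (- s * g x))) + s * integral\<^sup>L M (\<lambda>x. f x * g x)
      \<le> s\<^sup>2 * integral\<^sup>L M (\<lambda>x. f x * (g x)\<^sup>2)"
    unfolding Z_def by simp
qed

lemma integral_density_mult_sq_le:
  fixes f f0 g :: "'a \<Rightarrow> real"
  assumes f: "\<And>x. x \<in> space M \<Longrightarrow> 0 \<le> f x" "integrable M f"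
    and f0: "\<And>x. x \<in> space M \<Longrightarrow> 0 \<le> f0 x" "integrable M f0"
    and g: "g \<in> borel_measurable M" "AE x in M. \<bar>g x\<bar> \<le> b"
  shows "integral\<^sup>L M (\<lambda>x. f x * (g x)\<^sup>2)
    \<le> 2 * integral\<^sup>L M (\<lambda>x. f0 x * (g x)\<^sup>2) + 2 * b\<^sup>2 * integral\<^sup>L M (\<lambda>x. (sqrt (f x) - sqrt (f0 x))\<^sup>2)"
proof -
  define d where "d = (\<lambda>x. (sqrt (f x) - sqrt (f0 x))\<^sup>2)"
  have [measurable]: "f \<in> borel_measurable M" "f0 \<in> borel_measurable M" "g \<in> borel_measurable M"
    using f(2) f0(2) g(1) by auto
  have [measurable]: "d \<in> borel_measurable M"
    unfolding d_def by measurable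
  have int_d: "integrable M d"
  proof (rule Bochner_Integration.integrable_bound[where f="\<lambda>x. 2 * f x + 2 * f0 x"])
    show "AE x in M. norm (d x) \<le> norm (2 * f x + 2 * f0 x)"
    proof (intro AE_I2)
      fix x assume "x \<in> space M"
      then show "norm (d x) \<le> norm (2 * f x + 2 * f0 x)"
        using power2_add_le_twice[of "sqrt (f x)" "- sqrt (f0 x)"] f(1) f0(1) by (simp add: d_def)
    qed
  qed (use f(2) f0(2) in auto)
  have g2: "AE x in M. \<bar>(g x)\<^sup>2\<bar> \<le> b\<^sup>2"
    using g(2) by eventually_elim (simp, metis abs_ge_zero power_mono power2_abs)
  have int_g2: "integrable M (\<lambda>x. h x * (g x)\<^sup>2)" if "integrable M h" for h
    by (rule integrable_mult_AE_bounded[OF that _ g2]) measurable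
  have "integral\<^sup>L M (\<lambda>x. f x * (g x)\<^sup>2) \<le> integral\<^sup>L M (\<lambda>x. 2 * (f0 x * (g x)\<^sup>2) + 2 * (d x * (g x)\<^sup>2))"
  proof (rule integral_mono)
    fix x assume x: "x \<in> space M"
    have "f x = (sqrt (f0 x) + (sqrt (f x) - sqrt (f0 x)))\<^sup>2"
      using f(1)[OF x] by simp
    also have "\<dots> \<le> 2 * f0 x + 2 * d x"
      using power2_add_le_twice[of "sqrt (f0 x)" "sqrt (f x) - sqrt (f0 x)"] f0(1)[OF x]
      by (simp add: d_def del: real_sqrt_le_iff)
    finally have "f x * (g x)\<^sup>2 \<le> (2 * f0 x + 2 * d x) * (g x)\<^sup>2"
      by (rule mult_right_mono) simp
    then show "f x * (g x)\<^sup>2 \<le> 2 * (f0 x * (g x)\<^sup>2) + 2 * (d x * (g x)\<^sup>2)"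
      by (simp add: algebra_simps)
  qed (use int_g2 f(2) f0(2) int_d in auto)
  also have "\<dots> = 2 * integral\<^sup>L M (\<lambda>x. f0 x * (g x)\<^sup>2) + 2 * integral\<^sup>L M (\<lambda>x. d x * (g x)\<^sup>2)"
    using int_g2 f0(2) int_d by simp
  also have "integral\<^sup>L M (\<lambda>x. d x * (g x)\<^sup>2) \<le> integral\<^sup>L M (\<lambda>x. b\<^sup>2 * d x)"
  proof (rule integral_mono_AE)
    show "AE x in M. d x * (g x)\<^sup>2 \<le> b\<^sup>2 * d x"
      using g2
    proof eventually_elim
      case (elim x)
      have "d x * (g x)\<^sup>2 \<le> d x * b\<^sup>2"
        using elim by (intro mult_left_mono) (auto simp: d_def)
      then show ?case by (simp only: mult.commute)
    qed
  qed (use int_g2 int_d in auto)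
  finally show ?thesis
    by (simp add: d_def)
qed

lemma tilted_normalizer_bound:
  fixes f f0 \<gamma> :: "'a \<Rightarrow> real" and n :: nat and t k b a m :: real
  assumes f: "\<And>x. x \<in> space M \<Longrightarrow> 0 \<le> f x" "integrable M f" "integral\<^sup>L M f = 1"
    and f0: "\<And>x. x \<in> space M \<Longrightarrow> 0 \<le> f0 x" "integrable M f0" "integral\<^sup>L M f0 = 1"
    and \<gamma>: "\<gamma> \<in> borel_measurable M" "AE x in M. \<bar>\<gamma> x\<bar> \<le> B"
    and k: "k = integral\<^sup>L M (\<lambda>y. \<gamma> y * f0 y)" and \<gamma>k: "AE x in M. \<bar>\<gamma> x - k\<bar> \<le> b"
    and n: "n > 0" and tb: "\<bar>t\<bar> * b \<le> sqrt n"
    and hellinger: "integral\<^sup>L M (\<lambda>x. (sqrt (f x) - sqrt (f0 x))\<^sup>2) \<le> a\<^sup>2" and ba: "2 * b\<^sup>2 * a\<^sup>2 \<le> 1"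
    and variance: "integral\<^sup>L M (\<lambda>x. (\<gamma> x - k)\<^sup>2 * f0 x) \<le> m\<^sup>2"
  shows "0 < integral\<^sup>L M (\<lambda>x. f x * exp (- t * (\<gamma> x - k) / sqrt n))"
    and "t * sqrt n * integral\<^sup>L M (\<lambda>x. (f x - f0 x) * \<gamma> x)
      + n * ln (integral\<^sup>L M (\<lambda>x. f x * exp (- t * (\<gamma> x - k) / sqrt n))) \<le> (2 * m\<^sup>2 + 1) * t\<^sup>2"
proof -
  define s where "s = t / sqrt n"
  define g where "g x = \<gamma> x - k" for x
  have g: "g \<in> borel_measurable M" "AE x in M. \<bar>g x\<bar> \<le> b"
    using \<gamma>(1) \<gamma>k by (simp_all add: g_def[abs_def])
  have sqrt_n: "sqrt n > 0" using n by simp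
  have ns: "n * s = t * sqrt n" and ns2: "n * s\<^sup>2 = t\<^sup>2"
    using sqrt_n by (simp_all add: s_def field_simps power2_eq_square)
  have "\<bar>s\<bar> * b \<le> 1"
    using tb sqrt_n by (simp add: s_def abs_div field_simps)
  note tilted = ln_integral_tilted_density_le[OF f g this]
  have Z_eq: "(\<lambda>x. f x * exp (- t * (\<gamma> x - k) / sqrt n)) = (\<lambda>x. f x * exp (- s * g x))"
    by (simp add: s_def g_def)
  show "0 < integral\<^sup>L M (\<lambda>x. f x * exp (- t * (\<gamma> x - k) / sqrt n))"
    unfolding Z_eq by (rule tilted(1))
  have "integral\<^sup>L M (\<lambda>x. f x * (g x)\<^sup>2) \<le> 2 * m\<^sup>2 + 2 * b\<^sup>2 * a\<^sup>2"
  proof -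
    have "integral\<^sup>L M (\<lambda>x. f0 x * (g x)\<^sup>2) \<le> m\<^sup>2"
      using variance by (simp add: g_def mult.commute)
    moreover have "b\<^sup>2 * integral\<^sup>L M (\<lambda>x. (sqrt (f x) - sqrt (f0 x))\<^sup>2) \<le> b\<^sup>2 * a\<^sup>2"
      using hellinger by (simp add: mult_left_mono)
    ultimately show ?thesis
      using integral_density_mult_sq_le[OF f(1,2) f0(1,2) g] by linarith
  qed
  then have fg2: "integral\<^sup>L M (\<lambda>x. f x * (g x)\<^sup>2) \<le> 2 * m\<^sup>2 + 1"
    using ba by linarith
  have "t * sqrt n * integral\<^sup>L M (\<lambda>x. (f x - f0 x) * \<gamma> x)
      + n * ln (integral\<^sup>L M (\<lambda>x. f x * exp (- s * g x)))
      = n * (ln (integral\<^sup>L M (\<lambda>x. f x * exp (- s * g x))) + s * integral\<^sup>L M (\<lambda>x. f x * g x))"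
    using integral_diff_densities_mult[OF f(2,3) f0(2,3) \<gamma>]
    by (simp add: ns[symmetric] g_def k algebra_simps)
  also have "\<dots> \<le> n * (s\<^sup>2 * integral\<^sup>L M (\<lambda>x. f x * (g x)\<^sup>2))"
    using tilted(2) by (intro mult_left_mono) auto
  also have "\<dots> \<le> t\<^sup>2 * (2 * m\<^sup>2 + 1)"
    using fg2 by (simp add: mult.assoc[symmetric] ns2 mult_left_mono)
  finally show "t * sqrt n * integral\<^sup>L M (\<lambda>x. (f x - f0 x) * \<gamma> x)
      + n * ln (integral\<^sup>L M (\<lambda>x. f x * exp (- t * (\<gamma> x - k) / sqrt n))) \<le> (2 * m\<^sup>2 + 1) * t\<^sup>2"
    unfolding Z_eq by (simp add: mult.commute)
qed

abbreviation lborel01 :: "real measure" where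
  "lborel01 \<equiv> restrict_space lborel {0..1}"

lemma space_lborel01: "space lborel01 = {0..1}"
  by (simp add: space_restrict_space)

lemma set_integral_eq_lborel01:
  fixes u :: "real \<Rightarrow> real"
  shows "(LINT x:{0..1}|lborel. u x) = integral\<^sup>L lborel01 u"
  unfolding set_lebesgue_integral_def using integral_restrict_space[of "{0..1}" lborel u] by simp

lemma AE_lborel01: "(AE x in lborel. x \<in> {0..1} \<longrightarrow> P x) \<Longrightarrow> AE x in lborel01. P x"
  by (subst AE_restrict_space_iff) auto

lemma density01_lborel01:
  assumes "density01 f"
  shows "\<And>x. x \<in> space lborel01 \<Longrightarrow> 0 \<le> f x" "integrable lborel01 f" "integral\<^sup>L lborel01 f = 1"
  using assms
  by (auto simp: density01_def space_lborel01 set_integral_eq_lborel01 set_integrable_def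
      integrable_restrict_space)

lemma Linf01_lborel01:
  assumes "Linf01 u"
  obtains B where "u \<in> borel_measurable lborel01" "AE x in lborel01. \<bar>u x\<bar> \<le> B"
proof -
  from assms obtain B where "set_borel_measurable lborel {0..1} u"
    and "AE x in lborel. x \<in> {0..1} \<longrightarrow> \<bar>u x\<bar> \<le> B"
    unfolding Linf01_def by blast
  then show thesis
    using that[of B] AE_lborel01 borel_measurable_restrict_space_iff[of "{0..1}" lborel u]
    unfolding set_borel_measurable_def by auto
qed

lemma hellinger_nonneg: "0 \<le> hellinger f g"
  by (simp add: hellinger_def set_integral_eq_lborel01 Bochner_Integration.integral_nonneg)

lemma integral_sqrt_diff_sq_le_hellinger:
  assumes "hellinger f g \<le> a"
  shows "integral\<^sup>L lborel01 (\<lambda>x. (sqrt (f x) - sqrt (g x))\<^sup>2) \<le> a\<^sup>2"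
proof -
  have "0 \<le> integral\<^sup>L lborel01 (\<lambda>x. (sqrt (f x) - sqrt (g x))\<^sup>2)" by simp
  then show ?thesis
    using power_mono[OF assms hellinger_nonneg, of 2]
    by (simp add: hellinger_def set_integral_eq_lborel01)
qed

lemma integral_center_mult_density:
  assumes "density01 f0" "Linf01 u"
  shows "(LINT x:{0..1}|lborel. center f0 u x * f0 x) = 0"
proof -
  obtain B where u: "u \<in> borel_measurable lborel01" "AE x in lborel01. \<bar>u x\<bar> \<le> B"
    using Linf01_lborel01[OF assms(2)] .
  note f0 = density01_lborel01[OF assms(1)]
  have "integrable lborel01 (\<lambda>x. f0 x * u x)"
    by (rule integrable_mult_AE_bounded[OF f0(2) u])
  then have "integral\<^sup>L lborel01 (\<lambda>x. (u x - integral\<^sup>L lborel01 (\<lambda>y. u y * f0 y)) * f0 x)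
      = integral\<^sup>L lborel01 (\<lambda>x. f0 x * u x) - integral\<^sup>L lborel01 (\<lambda>y. u y * f0 y) * integral\<^sup>L lborel01 f0"
    using f0(2) by (simp add: right_diff_distrib mult.commute)
  then show ?thesis
    using f0(3) by (simp add: center_def set_integral_eq_lborel01 mult.commute)
qed

lemma integral_center_sq_le_of_normL_le:
  assumes "density01 f0" "Linf01 u" "normL f0 (center f0 u) \<le> m"
  shows "integral\<^sup>L lborel01 (\<lambda>x. (center f0 u x)\<^sup>2 * f0 x) \<le> m\<^sup>2"
proof -
  have "center f0 (center f0 u) = center f0 u"
    using integral_center_mult_density[OF assms(1,2)] by (simp add: center_def[of f0 "center f0 u"])
  moreover have "0 \<le> integral\<^sup>L lborel01 (\<lambda>x. (center f0 u x)\<^sup>2 * f0 x)"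
    using density01_lborel01(1)[OF assms(1)] by (intro Bochner_Integration.integral_nonneg) (auto simp: space_lborel01)
  ultimately show ?thesis
    using assms(3) power_mono[OF assms(3), of 2]
    by (simp add: normL_def set_integral_eq_lborel01)
qed

lemma tilt_scale_bounds:
  fixes a t :: real and n :: nat
  assumes a: "a > 0" and na: "real n * a\<^sup>2 \<ge> 1" and t: "\<bar>t\<bar> \<le> ln n" and n: "n \<ge> 1"
  defines "b \<equiv> 1 / (4 * a * ln (real n + 1))"
  shows "\<bar>t\<bar> * b \<le> sqrt n" and "2 * b\<^sup>2 * a\<^sup>2 \<le> 1"
proof -
  define L where "L = ln (real n + 1)"
  have b: "b = 1 / (4 * a * L)"
    by (simp add: b_def L_def)
  have "ln 2 \<le> L"
    unfolding L_def using n by (subst ln_le_cancel_iff) auto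
  then have L: "2 / 3 \<le> L"
    using ln2_ge_two_thirds by linarith
  have "1 \<le> sqrt (real n * a\<^sup>2)"
    using na by simp
  then have "1 \<le> sqrt n * a"
    using a by (simp add: real_sqrt_mult)
  have "ln n \<le> L"
    unfolding L_def using n by (subst ln_le_cancel_iff) auto
  then have "\<bar>t\<bar> \<le> L"
    using t by linarith
  also have "\<dots> \<le> L * (sqrt n * a) * 4"
    using \<open>1 \<le> sqrt n * a\<close> L by (simp add: mult_le_cancel_left1)
  finally show "\<bar>t\<bar> * b \<le> sqrt n"
    using a L by (simp add: b field_simps)
  have "2 * b\<^sup>2 * a\<^sup>2 = 1 / (8 * L\<^sup>2)"
    using a by (simp add: b power2_eq_square field_simps)
  also have "\<dots> \<le> 1"
    using L power_mono[OF L, of 2] by (simp add: power2_eq_square)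
  finally show "2 * b\<^sup>2 * a\<^sup>2 \<le> 1" .
qed

lemma loglik_tilt:
  assumes "\<forall>i\<in>{1..n}. 0 < f (X i)" and Z: "0 < (LINT y:{0..1}|lborel. f y * exp (- t * g y / sqrt n))"
  shows "loglik n X (tilt n t g f)
    = loglik n X f - t * (\<Sum>i=1..n. g (X i)) / sqrt n - n * ln (LINT y:{0..1}|lborel. f y * exp (- t * g y / sqrt n))"
proof -
  let ?Z = "LINT y:{0..1}|lborel. f y * exp (- t * g y / sqrt n)"
  have "loglik n X (tilt n t g f) = (\<Sum>i=1..n. ln (f (X i)) - t * g (X i) / sqrt n - ln ?Z)"
    unfolding loglik_def tilt_def
  proof (intro sum.cong refl)
    fix i assume "i \<in> {1..n}"
    then have "0 < f (X i)" using assms(1) by blast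
    then show "ln (f (X i) * exp (- t * g (X i) / sqrt n) / ?Z) = ln (f (X i)) - t * g (X i) / sqrt n - ln ?Z"
      using Z by (simp add: ln_div ln_mult)
  qed
  then show ?thesis
    by (simp add: loglik_def sum_subtractf sum_divide_distrib sum_distrib_left)
qed

lemma loglik_tilt_bound:
  fixes f0 f \<gamma> :: "real \<Rightarrow> real" and X :: "nat \<Rightarrow> real" and n :: nat and t a m :: real
  assumes f0: "density01 f0" and f: "density01 f" "\<forall>x\<in>{0..1}. 0 < f x"
    and hellinger: "hellinger f f0 \<le> a" and na: "real n * a\<^sup>2 \<ge> 1" and n: "n \<ge> 1"
    and \<gamma>: "Linf01 \<gamma>" "normL f0 (center f0 \<gamma>) \<le> m"
      "AE x in lborel. x \<in> {0..1} \<longrightarrow> \<bar>center f0 \<gamma> x\<bar> \<le> 1 / (4 * a * ln (real n + 1))"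
    and t: "\<bar>t\<bar> \<le> ln n" and X: "\<forall>i\<in>{1..n}. X i \<in> {0..1}"
  shows "t * sqrt n * inner2 (\<lambda>x. f x - f0 x) \<gamma> + loglik n X f
    \<le> (2 * m\<^sup>2 + 1) * t\<^sup>2 + t * Wn f0 n X \<gamma> + loglik n X (tilt n t (center f0 \<gamma>) f)"
proof -
  define k where "k = integral\<^sup>L lborel01 (\<lambda>y. \<gamma> y * f0 y)"
  have center: "center f0 \<gamma> = (\<lambda>x. \<gamma> x - k)"
    by (simp add: center_def k_def set_integral_eq_lborel01)
  obtain B where \<gamma>01: "\<gamma> \<in> borel_measurable lborel01" "AE x in lborel01. \<bar>\<gamma> x\<bar> \<le> B"
    using Linf01_lborel01[OF \<gamma>(1)] .
  have "a \<noteq> 0" using na by auto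
  then have a: "a > 0" using hellinger hellinger_nonneg[of f f0] by linarith
  note scale = tilt_scale_bounds[OF a na t n]
  have \<gamma>k: "AE x in lborel01. \<bar>\<gamma> x - k\<bar> \<le> 1 / (4 * a * ln (real n + 1))"
    using AE_lborel01[OF \<gamma>(3)] by (simp add: center)
  have variance: "integral\<^sup>L lborel01 (\<lambda>x. (\<gamma> x - k)\<^sup>2 * f0 x) \<le> m\<^sup>2"
    using integral_center_sq_le_of_normL_le[OF f0 \<gamma>(1,2)] by (simp add: center)
  note normalizer = tilted_normalizer_bound[OF density01_lborel01[OF f(1)] density01_lborel01[OF f0]
      \<gamma>01 k_def \<gamma>k _ scale(1) integral_sqrt_diff_sq_le_hellinger[OF hellinger] scale(2) variance]
  define Z where "Z = (LINT y:{0..1}|lborel. f y * exp (- t * center f0 \<gamma> y / sqrt n))"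
  have "0 < Z" and "t * sqrt n * inner2 (\<lambda>x. f x - f0 x) \<gamma> + n * ln Z \<le> (2 * m\<^sup>2 + 1) * t\<^sup>2"
    using normalizer n by (simp_all add: Z_def center inner2_def set_integral_eq_lborel01)
  moreover have "loglik n X (tilt n t (center f0 \<gamma>) f) = loglik n X f - t * Wn f0 n X \<gamma> - n * ln Z"
    using loglik_tilt[of n f X t "center f0 \<gamma>"] \<open>0 < Z\<close> f(2) X by (simp add: Z_def Wn_def)
  ultimately show ?thesis by linarith
qed

theorem lemma3:
  fixes m D0 :: real
  assumes "m > 0"
  shows "\<exists>C>0. \<forall>(f0::real \<Rightarrow> real) (a::nat \<Rightarrow> real) (Pri::nat \<Rightarrow> (real \<Rightarrow> real) measure) (\<gamma>::nat \<Rightarrow> real \<Rightarrow> real).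
     density01 f0 \<and> (\<exists>\<rho>0>0. \<forall>x\<in>{0..1}. \<rho>0 \<le> f0 x) \<and> (\<forall>x\<in>{0..1}. f0 x \<le> D0)
     \<and> (\<forall>n\<ge>1. real n * (a n)\<^sup>2 \<ge> 1)
     \<and> (\<forall>n\<ge>1. prob_space (Pri n) \<and>
          (AE f in Pri n. density01 f \<and> (\<exists>c>0. \<exists>B. \<forall>x\<in>{0..1}. c \<le> f x \<and> f x \<le> B)
                         \<and> hellinger f f0 \<le> a n))
     \<and> (\<forall>n. Linf01 (\<gamma> n))
     \<and> (\<forall>n\<ge>1. normL f0 (center f0 (\<gamma> n)) \<le> m
          \<and> (AE x in lborel. x \<in> {0..1} \<longrightarrow>
               \<bar>center f0 (\<gamma> n) x\<bar> \<le> 1 / (4 * a n * ln (real n + 1))))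
     \<longrightarrow> (\<forall>n\<ge>1. \<forall>t::real. \<bar>t\<bar> \<le> ln (real n) \<longrightarrow>
          (\<forall>X::nat \<Rightarrow> real. (\<forall>i\<in>{1..n}. X i \<in> {0..1}) \<longrightarrow>
            post_exp (Pri n) n X (\<lambda>f. exp (t * sqrt (real n) * inner2 (\<lambda>x. f x - f0 x) (\<gamma> n)))
            \<le> ennreal (exp (C * t\<^sup>2 + t * Wn f0 n X (\<gamma> n)))
               * (\<integral>\<^sup>+ f. ennreal (exp (loglik n X (tilt n t (center f0 (\<gamma> n)) f) - loglik n X f0)) \<partial>Pri n)
               / (\<integral>\<^sup>+ f. ennreal (exp (loglik n X f - loglik n X f0)) \<partial>Pri n)))"
proof (intro exI[of _ "2 * m\<^sup>2 + 1"] conjI allI impI, goal_cases)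
  case 1
  then show ?case by (simp add: add_nonneg_pos)
next
  case (2 f0 a Pri \<gamma> n t X)
  then have prior: "AE f in Pri n. density01 f \<and> (\<exists>c>0. \<exists>B. \<forall>x\<in>{0..1}. c \<le> f x \<and> f x \<le> B)
      \<and> hellinger f f0 \<le> a n"
    by blast
  have "AE f in Pri n. t * sqrt n * inner2 (\<lambda>x. f x - f0 x) (\<gamma> n) + loglik n X f
    \<le> (2 * m\<^sup>2 + 1) * t\<^sup>2 + t * Wn f0 n X (\<gamma> n) + loglik n X (tilt n t (center f0 (\<gamma> n)) f)"
    using prior
  proof eventually_elim
    case (elim f)
    then have "\<forall>x\<in>{0..1}. 0 < f x"
      by (fastforce dest: order.strict_trans2)
    with elim 2 show ?case
      by (intro loglik_tilt_bound) auto
  qed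
  then show ?case
    unfolding post_exp_def by (rule nn_integral_ratio_shift_le)
qed

end
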